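(* Let $k\ge 1$ and let $n_1,\ldots,n_k\ge 3$ be (not necessarily distinct) integers such that $\gcd(k, n_1\cdots n_k)=1$. Then $C_{n_1}\Box\cdots\Box C_{n_k}$ is $\mathbb{Z}_{n_1\cdots n_k}$-distance antimagic if and only if all of $n_1,\ldots,n_k$ are odd. In particular, if $k\ge1$ and the odd integer $n\ge 3$ are coprime, then the Cartesian product of $k$ copies of $C_n$ is $\mathbb{Z}_{n^k}$-distance antimagic.
   Context: $C_n$ is the cycle of length $n$. The Cartesian product $G_1\Box\cdots\Box G_k$ has vertex set $V(G_1)\times\cdots\times V(G_k)$, with two tuples adjacent iff they differ in exactly one coordinate $i$ and are adjacent there in $G_i$. For a graph $G$ with $n$ vertices, a $\mathbb{Z}_n$-distance antimagic labelling is a bijection $f:V(G)\to\mathbb{Z}_n$ such that the weights $w_f(x)=\sum_{y\in N(x)} f(y)$ (mod $n$, $N(x)$ the open neighbourhood) are pairwise distinct; $G$ is $\mathbb{Z}_n$-distance antimagic if such a labelling exists. *)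

theory Defs
  imports Main
begin

definition cyc_adj :: "nat \<Rightarrow> nat \<Rightarrow> nat \<Rightarrow> bool" where
  "cyc_adj n a b \<longleftrightarrow> a < n \<and> b < n \<and> ((a + 1) mod n = b \<or> (b + 1) mod n = a)"

text \<open>Vertex set of C_{n_1} box ... box C_{n_k}, where ns = [n_1,...,n_k]: tuples as lists.\<close>
definition cprod_verts :: "nat list \<Rightarrow> nat list set" where
  "cprod_verts ns = {xs. length xs = length ns \<and> (\<forall>i<length ns. xs ! i < ns ! i)}"

definition cprod_adj :: "nat list \<Rightarrow> nat list \<Rightarrow> nat list \<Rightarrow> bool" where
  "cprod_adj ns xs ys \<longleftrightarrow> xs \<in> cprod_verts ns \<and> ys \<in> cprod_verts ns \<and>
     (\<exists>i<length ns. cyc_adj (ns ! i) (xs ! i) (ys ! i) \<and>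
        (\<forall>j<length ns. j \<noteq> i \<longrightarrow> xs ! j = ys ! j))"

text \<open>Z_n-distance antimagic, n = |V|; Z_n represented by {0..<n}, weights reduced mod n.\<close>
definition zn_distance_antimagic :: "'a set \<Rightarrow> ('a \<Rightarrow> 'a \<Rightarrow> bool) \<Rightarrow> bool" where
  "zn_distance_antimagic V E \<longleftrightarrow>
     (\<exists>f. bij_betw f V {0..<card V} \<and>
          inj_on (\<lambda>x. (\<Sum>y\<in>{y\<in>V. E x y}. f y) mod card V) V)"

end

theory Submission
  imports Defs "HOL-Number_Theory.Cong"
begin

text \<open>
  Write N = n_1 \<cdots> n_k. If some n_i is even then N is even, and since the graph is
  2k-regular the weights add up to 2k(0 + 1 + \<dots> + (N-1)) = kN(N-1) \<equiv> 0 (mod N); distinct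
  weights would have to be all residues, whose sum N(N-1)/2 is not divisible by an even N.
  Conversely, if all n_i are odd, label each vertex by its value as a mixed-radix numeral
  with digits x_1, \<dots>, x_k (x_1 least significant). Modulo n_1 the weight of x is 2k x_1,
  and 2k is a unit mod n_1 since n_1 is odd and gcd(k, N) = 1, so the weight determines
  x_1; cancelling the lowest digit leaves a weight-like expression on the remaining
  coordinates, and induction recovers all digits.
\<close>

lemma double_Sum_atLeast0LessThan: "2 * \<Sum>{0..<N} = N * (N - 1)" for N :: nat
  by (induction N) (auto simp: algebra_simps)

lemma not_dvd_Sum_atLeast0LessThan:
  fixes N :: nat
  assumes "even N" "N > 0"
  shows "\<not> N dvd \<Sum>{0..<N}"
proof
  assume dvd: "N dvd \<Sum>{0..<N}"
  obtain m where m: "N = 2 * m" using assms(1) by blast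
  have "\<Sum>{0..<N} = m * (2 * m - 1)"
    using double_Sum_atLeast0LessThan[of N] m by simp
  then have "m * 2 dvd m * (2 * m - 1)" using dvd m by (simp add: mult.commute)
  then have "2 dvd 2 * m - 1" using assms(2) m by simp
  then show False using assms(2) m by simp
qed

lemma not_zn_distance_antimagic_if_even_regular:
  assumes fin: "finite V" and nonempty: "V \<noteq> {}" and even_card: "even (card V)"
    and even_degree: "even r" and regular: "\<forall>y\<in>V. card {x \<in> V. E x y} = r"
  shows "\<not> zn_distance_antimagic V E"
proof
  define N where "N = card V"
  assume "zn_distance_antimagic V E"
  then obtain f where f: "bij_betw f V {0..<N}"
    and inj: "inj_on (\<lambda>x. (\<Sum>y\<in>{y \<in> V. E x y}. f y) mod N) V"
    unfolding zn_distance_antimagic_def N_def by blast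
  define w where "w x = (\<Sum>y\<in>{y \<in> V. E x y}. f y)" for x
  have N: "N > 0" using fin nonempty by (simp add: N_def card_gt_0_iff)
  have "(\<Sum>x\<in>V. w x) = (\<Sum>y\<in>V. \<Sum>x\<in>{x \<in> V. E x y}. f y)"
    unfolding w_def by (rule sum.swap_restrict[OF fin fin])
  also have "\<dots> = r * (\<Sum>y\<in>V. f y)"
    using regular by (simp add: sum_distrib_left)
  also have "(\<Sum>y\<in>V. f y) = \<Sum>{0..<N}"
    using sum.reindex_bij_betw[OF f, of id] by simp
  finally have sum_w: "(\<Sum>x\<in>V. w x) = r * \<Sum>{0..<N}" .
  have "(\<lambda>x. w x mod N) ` V = {0..<N}"
    using inj N by (intro card_subset_eq) (auto simp: card_image w_def N_def)
  then have "bij_betw (\<lambda>x. w x mod N) V {0..<N}"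
    using inj by (simp add: bij_betw_def w_def)
  then have "\<Sum>{0..<N} = (\<Sum>x\<in>V. w x mod N)"
    using sum.reindex_bij_betw[of _ V "{0..<N}" id] by simp
  also have "[\<dots> = \<Sum>x\<in>V. w x] (mod N)"
    by (simp add: cong_def mod_sum_eq)
  also have "[(\<Sum>x\<in>V. w x) = 0] (mod N)"
  proof -
    obtain s where "r = 2 * s" using even_degree by blast
    then have "(\<Sum>x\<in>V. w x) = N * (s * (N - 1))"
      using sum_w double_Sum_atLeast0LessThan[of N] by (simp add: algebra_simps)
    then show ?thesis by (simp add: cong_0_iff)
  qed
  finally have "N dvd \<Sum>{0..<N}" by (simp add: cong_0_iff)
  then show False
    using not_dvd_Sum_atLeast0LessThan even_card N by (simp add: N_def)
qed

fun radix_value :: "nat list \<Rightarrow> nat list \<Rightarrow> nat" where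
  "radix_value (n # ns) (x # xs) = x + n * radix_value ns xs"
| "radix_value _ _ = 0"

definition cprod_nbrs :: "nat list \<Rightarrow> nat list \<Rightarrow> nat list set" where
  "cprod_nbrs ns x = {y \<in> cprod_verts ns. cprod_adj ns x y}"

definition radix_weight :: "nat list \<Rightarrow> nat list \<Rightarrow> nat" where
  "radix_weight ns x = (\<Sum>y\<in>cprod_nbrs ns x. radix_value ns y)"

lemma cprod_verts_Nil [simp]: "cprod_verts [] = {[]}"
  by (auto simp: cprod_verts_def)

lemma Cons_in_cprod_verts_iff [simp]:
  "a # xs \<in> cprod_verts (n # ns) \<longleftrightarrow> a < n \<and> xs \<in> cprod_verts ns"
  by (auto simp: cprod_verts_def All_less_Suc2)

lemma cprod_verts_ConsE:
  assumes "x \<in> cprod_verts (n # ns)"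
  obtains a xs where "x = a # xs" "a < n" "xs \<in> cprod_verts ns"
  using assms by (cases x) (auto simp: cprod_verts_def All_less_Suc2)

lemma bij_betw_radix_value: "bij_betw (radix_value ns) (cprod_verts ns) {0..<prod_list ns}"
proof (induction ns)
  case Nil
  then show ?case by (simp add: bij_betw_def)
next
  case (Cons n ns)
  have "inj_on (radix_value (n # ns)) (cprod_verts (n # ns))"
  proof (rule inj_onI)
    fix x y assume "x \<in> cprod_verts (n # ns)" "y \<in> cprod_verts (n # ns)"
      and eq: "radix_value (n # ns) x = radix_value (n # ns) y"
    then obtain a xs b ys where x: "x = a # xs" "a < n" "xs \<in> cprod_verts ns"
      and y: "y = b # ys" "b < n" "ys \<in> cprod_verts ns"
      by (metis cprod_verts_ConsE)
    have "(a + n * radix_value ns xs) mod n = (b + n * radix_value ns ys) mod n"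
      using eq x y by simp
    then have "a = b" using x y by simp
    then have "radix_value ns xs = radix_value ns ys" using eq x y by simp
    then show "x = y"
      using Cons.IH x y \<open>a = b\<close> by (simp add: bij_betw_def inj_on_def)
  qed
  moreover have "radix_value (n # ns) ` cprod_verts (n # ns) = {0..<prod_list (n # ns)}"
  proof (intro equalityI subsetI)
    fix m assume "m \<in> radix_value (n # ns) ` cprod_verts (n # ns)"
    then obtain a xs where "m = a + n * radix_value ns xs" "a < n" "xs \<in> cprod_verts ns"
      by (auto elim: cprod_verts_ConsE)
    moreover have "radix_value ns xs < prod_list ns"
      using bij_betwE[OF Cons.IH] \<open>xs \<in> cprod_verts ns\<close> by simp
    ultimately have "m < n * (radix_value ns xs + 1)" by simp
    also have "\<dots> \<le> n * prod_list ns"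
      using \<open>radix_value ns xs < prod_list ns\<close> by (intro mult_le_mono2) simp
    finally show "m \<in> {0..<prod_list (n # ns)}" by simp
  next
    fix m assume "m \<in> {0..<prod_list (n # ns)}"
    then have "m < n * prod_list ns" by simp
    then have "n > 0" by (rule contrapos_pp) simp
    with \<open>m < n * prod_list ns\<close> have "m div n < prod_list ns"
      by (simp add: div_less_iff_less_mult mult.commute)
    then obtain xs where "xs \<in> cprod_verts ns" "radix_value ns xs = m div n"
      using Cons.IH by (metis atLeastLessThan_iff bij_betw_def imageE zero_le)
    then have "m mod n # xs \<in> cprod_verts (n # ns)" "radix_value (n # ns) (m mod n # xs) = m"
      using \<open>n > 0\<close> by simp_all
    then show "m \<in> radix_value (n # ns) ` cprod_verts (n # ns)" by (metis image_eqI)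
  qed
  ultimately show ?case by (simp add: bij_betw_def)
qed

lemma card_cprod_verts: "card (cprod_verts ns) = prod_list ns"
  using bij_betw_same_card[OF bij_betw_radix_value] by simp

lemma finite_cprod_verts: "finite (cprod_verts ns)"
  using bij_betw_finite[OF bij_betw_radix_value] by simp

lemma cyc_adj_iff:
  assumes "n \<ge> 3" "a < n" "b < n"
  shows "cyc_adj n a b \<longleftrightarrow> b = (a + 1) mod n \<or> b = (a + n - 1) mod n"
proof -
  have "(b + 1) mod n = a \<longleftrightarrow> b = (a + n - 1) mod n"
    using assms by (cases "a = 0"; cases "b + 1 = n") (auto simp: mod_if)
  then show ?thesis using assms by (auto simp: cyc_adj_def)
qed

lemma cyc_succ_pred_distinct:
  fixes n a :: nat
  assumes "n \<ge> 3" "a < n"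
  shows "(a + 1) mod n \<noteq> a" "(a + n - 1) mod n \<noteq> a" "(a + 1) mod n \<noteq> (a + n - 1) mod n"
  using assms by (cases "a = 0"; cases "a + 1 = n"; auto simp: mod_if)+

lemma cyc_succ_add_pred_cong:
  fixes n a :: nat
  assumes "n > 0"
  shows "[(a + 1) mod n + (a + n - 1) mod n = 2 * a] (mod n)"
proof -
  have "[(a + 1) mod n + (a + n - 1) mod n = (a + 1) + (a + n - 1)] (mod n)"
    by (intro cong_add) (simp_all add: cong_def)
  also have "(a + 1) + (a + n - 1) = 2 * a + n" using assms by simp
  also have "[2 * a + n = 2 * a] (mod n)" by (simp add: cong_def)
  finally show ?thesis .
qed

lemma cprod_adj_sym: "cprod_adj ns x y \<Longrightarrow> cprod_adj ns y x"
  unfolding cprod_adj_def cyc_adj_def by metis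

lemma cprod_adj_Cons_iff:
  assumes "a # xs \<in> cprod_verts (n # ns)" "b # ys \<in> cprod_verts (n # ns)"
  shows "cprod_adj (n # ns) (a # xs) (b # ys) \<longleftrightarrow>
           cyc_adj n a b \<and> xs = ys \<or> a = b \<and> cprod_adj ns xs ys"
proof -
  have "length xs = length ns" "length ys = length ns"
    using assms by (auto simp: cprod_verts_def)
  then have "(\<forall>j<length ns. xs ! j = ys ! j) \<longleftrightarrow> xs = ys"
    by (auto simp: list_eq_iff_nth_eq)
  then show ?thesis
    using assms unfolding cprod_adj_def by (auto simp: Ex_less_Suc2 All_less_Suc2)
qed

lemma cprod_nbrs_Cons:
  assumes "n \<ge> 3" "a < n" "xs \<in> cprod_verts ns"
  shows "cprod_nbrs (n # ns) (a # xs) =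
           {(a + 1) mod n # xs, (a + n - 1) mod n # xs} \<union> Cons a ` cprod_nbrs ns xs"
proof (intro equalityI subsetI)
  fix y assume "y \<in> cprod_nbrs (n # ns) (a # xs)"
  then have "y \<in> cprod_verts (n # ns)" "cprod_adj (n # ns) (a # xs) y"
    by (auto simp: cprod_nbrs_def)
  then show "y \<in> {(a + 1) mod n # xs, (a + n - 1) mod n # xs} \<union> Cons a ` cprod_nbrs ns xs"
    using assms by (auto elim!: cprod_verts_ConsE simp: cprod_adj_Cons_iff cyc_adj_iff cprod_nbrs_def)
next
  fix y assume "y \<in> {(a + 1) mod n # xs, (a + n - 1) mod n # xs} \<union> Cons a ` cprod_nbrs ns xs"
  moreover have "(a + 1) mod n < n" "(a + n - 1) mod n < n" using assms by simp_all
  ultimately show "y \<in> cprod_nbrs (n # ns) (a # xs)"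
    using assms by (auto simp: cprod_nbrs_def cprod_adj_Cons_iff cyc_adj_iff)
qed

lemma finite_cprod_nbrs: "finite (cprod_nbrs ns x)"
  using finite_cprod_verts by (simp add: cprod_nbrs_def)

lemma card_cprod_nbrs:
  assumes "\<forall>i<length ns. ns ! i \<ge> 3" "x \<in> cprod_verts ns"
  shows "card (cprod_nbrs ns x) = 2 * length ns"
  using assms
proof (induction ns arbitrary: x)
  case Nil
  then show ?case by (simp add: cprod_nbrs_def cprod_adj_def)
next
  case (Cons n ns)
  then obtain a xs where x: "x = a # xs" "a < n" "xs \<in> cprod_verts ns"
    by (auto elim: cprod_verts_ConsE)
  have "n \<ge> 3" "\<forall>i<length ns. ns ! i \<ge> 3"
    using Cons.prems(1) by (auto simp: All_less_Suc2)
  then have "card (Cons a ` cprod_nbrs ns xs) = 2 * length ns"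
    using Cons.IH x by (simp add: card_image)
  moreover note cyc_succ_pred_distinct[OF \<open>n \<ge> 3\<close> \<open>a < n\<close>]
  ultimately show ?case
    using x \<open>n \<ge> 3\<close> by (simp add: cprod_nbrs_Cons card_insert_if finite_cprod_nbrs image_iff)
qed

lemma radix_weight_Cons:
  assumes "\<forall>i<length ns. ns ! i \<ge> 3" "n \<ge> 3" "a < n" "xs \<in> cprod_verts ns"
  shows "radix_weight (n # ns) (a # xs) =
           (a + 1) mod n + (a + n - 1) mod n + 2 * n * radix_value ns xs
           + 2 * length ns * a + n * radix_weight ns xs"
proof -
  note distinct = cyc_succ_pred_distinct[OF assms(2,3)]
  have "radix_weight (n # ns) (a # xs) =
          (\<Sum>y\<in>{(a + 1) mod n # xs, (a + n - 1) mod n # xs}. radix_value (n # ns) y)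
          + (\<Sum>y\<in>Cons a ` cprod_nbrs ns xs. radix_value (n # ns) y)"
    unfolding radix_weight_def cprod_nbrs_Cons[OF assms(2-4)]
    using distinct by (intro sum.union_disjoint) (auto simp: finite_cprod_nbrs)
  also have "(\<Sum>y\<in>Cons a ` cprod_nbrs ns xs. radix_value (n # ns) y)
               = (\<Sum>ys\<in>cprod_nbrs ns xs. a + n * radix_value ns ys)"
    by (simp add: sum.reindex)
  also have "\<dots> = 2 * length ns * a + n * radix_weight ns xs"
    using card_cprod_nbrs[OF assms(1,4)]
    by (simp add: sum.distrib sum_distrib_left radix_weight_def)
  finally show ?thesis using distinct by simp
qed

text \<open>The multiple c of the label is needed for the induction: removing the lowest digit
  turns c * label + weight into the same expression for the remaining coordinates with c + 2.\<close>

lemma radix_weight_cong_imp_eq: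
  assumes "\<forall>i<length ns. ns ! i \<ge> 3" "\<forall>i<length ns. coprime (c + 2 * length ns) (ns ! i)"
    "x \<in> cprod_verts ns" "y \<in> cprod_verts ns"
    "[c * radix_value ns x + radix_weight ns x = c * radix_value ns y + radix_weight ns y]
       (mod prod_list ns)"
  shows "x = y"
  using assms
proof (induction ns arbitrary: c x y)
  case Nil
  then show ?case by simp
next
  case (Cons n ns)
  obtain a xs b ys where x: "x = a # xs" "a < n" "xs \<in> cprod_verts ns"
    and y: "y = b # ys" "b < n" "ys \<in> cprod_verts ns"
    using Cons.prems(3,4) by (metis cprod_verts_ConsE)
  have n: "n \<ge> 3" and ns: "\<forall>i<length ns. ns ! i \<ge> 3"
    using Cons.prems(1) by (auto simp: All_less_Suc2)
  define k where "k = c + 2 * length ns"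
  have coprime_n: "coprime (k + 2) n"
    and coprime_ns: "\<forall>i<length ns. coprime (c + 2 + 2 * length ns) (ns ! i)"
    using Cons.prems(2) by (simp_all add: All_less_Suc2 algebra_simps k_def)
  define T where "T z = (z + 1) mod n + (z + n - 1) mod n + k * z" for z
  define R where "R zs = (c + 2) * radix_value ns zs + radix_weight ns zs" for zs
  have split: "c * radix_value (n # ns) (z # zs) + radix_weight (n # ns) (z # zs) = T z + n * R zs"
    if "z < n" "zs \<in> cprod_verts ns" for z zs
    using radix_weight_Cons[OF ns n that] by (simp add: T_def R_def k_def algebra_simps)
  have T_cong: "[T z = (k + 2) * z] (mod n)" for z
  proof -
    have "[T z = 2 * z + k * z] (mod n)"
      unfolding T_def using n by (intro cong_add cyc_succ_add_pred_cong) simp_all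
    moreover have "2 * z + k * z = (k + 2) * z" by (simp add: algebra_simps)
    ultimately show ?thesis by simp
  qed
  have hyp: "[T a + n * R xs = T b + n * R ys] (mod n * prod_list ns)"
    using Cons.prems(5) x y split by simp
  then have "[T a + n * R xs = T b + n * R ys] (mod n)"
    by (rule cong_modulus_mult_nat)
  then have "[T a = T b] (mod n)"
    by (simp add: cong_def)
  then have "[(k + 2) * a = (k + 2) * b] (mod n)"
    using T_cong by (meson cong_sym cong_trans)
  then have "[a = b] (mod n)"
    using cong_mult_lcancel_nat[OF coprime_n] by simp
  then have "a = b"
    using x y by (simp add: cong_def)
  with hyp have "[n * R xs = n * R ys] (mod n * prod_list ns)"
    by (simp add: cong_add_lcancel_nat)
  then have "[R xs = R ys] (mod prod_list ns)"
    using n by (simp add: cong_def mod_mult_mult1)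
  then have "xs = ys"
    using Cons.IH[OF ns coprime_ns x(3) y(3)] by (simp add: R_def)
  then show ?case using x y \<open>a = b\<close> by simp
qed

lemma cprod_zn_distance_antimagic_if_odd:
  assumes "\<forall>i<length ns. ns ! i \<ge> 3" "\<forall>i<length ns. odd (ns ! i)"
    and "coprime (length ns) (prod_list ns)"
  shows "zn_distance_antimagic (cprod_verts ns) (cprod_adj ns)"
proof -
  have "coprime (length ns) (ns ! i)" if "i < length ns" for i
    using prod_list_dvd[OF nth_mem[OF that]] assms(3) by (rule coprime_divisors[OF dvd_refl])
  then have coprime: "\<forall>i<length ns. coprime (0 + 2 * length ns) (ns ! i)"
    using assms(2) by simp
  show ?thesis
    unfolding zn_distance_antimagic_def card_cprod_verts
  proof (intro exI[of _ "radix_value ns"] conjI bij_betw_radix_value inj_onI)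
    fix x y assume "x \<in> cprod_verts ns" "y \<in> cprod_verts ns"
      and "(\<Sum>z\<in>{z \<in> cprod_verts ns. cprod_adj ns x z}. radix_value ns z) mod prod_list ns
         = (\<Sum>z\<in>{z \<in> cprod_verts ns. cprod_adj ns y z}. radix_value ns z) mod prod_list ns"
    then show "x = y"
      using radix_weight_cong_imp_eq[OF assms(1) coprime]
      by (simp add: cong_def radix_weight_def cprod_nbrs_def)
  qed
qed

lemma cprod_not_zn_distance_antimagic_if_even:
  assumes "\<forall>i<length ns. ns ! i \<ge> 3" "i < length ns" "even (ns ! i)"
  shows "\<not> zn_distance_antimagic (cprod_verts ns) (cprod_adj ns)"
proof (rule not_zn_distance_antimagic_if_even_regular)
  have "0 \<notin> set ns" using assms(1) by (auto simp: in_set_conv_nth)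
  then show "cprod_verts ns \<noteq> {}"
    using card_cprod_verts[of ns] by (auto simp: prod_list_zero_iff)
  show "even (card (cprod_verts ns))"
    using prod_list_dvd[OF nth_mem[OF assms(2)]] assms(3)
    by (simp add: card_cprod_verts dvd_trans)
  show "\<forall>y\<in>cprod_verts ns. card {x \<in> cprod_verts ns. cprod_adj ns x y} = 2 * length ns"
  proof
    fix y assume "y \<in> cprod_verts ns"
    moreover have "{x \<in> cprod_verts ns. cprod_adj ns x y} = cprod_nbrs ns y"
      unfolding cprod_nbrs_def using cprod_adj_sym by blast
    ultimately show "card {x \<in> cprod_verts ns. cprod_adj ns x y} = 2 * length ns"
      using card_cprod_nbrs[OF assms(1)] by simp
  qed
qed (simp_all add: finite_cprod_verts)

theorem mainTheorem13:
  shows "(\<forall>ns :: nat list. length ns \<ge> 1 \<longrightarrow> (\<forall>i<length ns. ns ! i \<ge> 3) \<longrightarrow>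
            coprime (length ns) (prod_list ns) \<longrightarrow>
            (zn_distance_antimagic (cprod_verts ns) (cprod_adj ns) \<longleftrightarrow>
             (\<forall>i<length ns. odd (ns ! i))))
       \<and> (\<forall>k n :: nat. k \<ge> 1 \<longrightarrow> odd n \<longrightarrow> n \<ge> 3 \<longrightarrow> coprime k n \<longrightarrow>
            zn_distance_antimagic (cprod_verts (replicate k n)) (cprod_adj (replicate k n)))"
proof (intro conjI allI impI)
  fix ns :: "nat list"
  assume "\<forall>i<length ns. ns ! i \<ge> 3" "coprime (length ns) (prod_list ns)"
  then show "zn_distance_antimagic (cprod_verts ns) (cprod_adj ns) \<longleftrightarrow> (\<forall>i<length ns. odd (ns ! i))"
    using cprod_zn_distance_antimagic_if_odd cprod_not_zn_distance_antimagic_if_even by blast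
next
  fix k n :: nat
  assume "odd n" "n \<ge> 3" "coprime k n"
  then show "zn_distance_antimagic (cprod_verts (replicate k n)) (cprod_adj (replicate k n))"
    by (intro cprod_zn_distance_antimagic_if_odd) simp_all
qed

end
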